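(* Let $d\ge 2$, let $P_1,\dots,P_d$ be matrix polynomials with $P_i(x_1,\dots,x_d)=\sum_{i_1=0}^{\tau_1}\cdots\sum_{i_d=0}^{\tau_d}P^{(i)}_{i_1,\dots,i_d}x_1^{i_1}\cdots x_d^{i_d}$, $P^{(i)}_{i_1,\dots,i_d}\in\mathbb{C}^{n_i\times n_i}$, and let $N=\prod_{i=1}^d n_i$. Suppose $(x_1^*,\dots,x_d^* )\in\mathbb{C}^d$ and nonzero $\mathbf{v}_i\in\mathbb{C}^{n_i}$ satisfy $P_i(x_1^*,\dots,x_d^* )\mathbf{v}_i=0$ for all $1\le i\le d$, and set $\mathbf{v}=\mathbf{v}_1\otimes\cdots\otimes\mathbf{v}_d$. Let $V$ be the block vector whose block indexed by $\mathbf{i}=(i_1,\dots,i_{d-1})$, $0\le i_k\le\alpha_k$ (ordered as the block columns of $R$), is $\prod_{k=1}^{d-1}(x_k^* )^{i_k}\mathbf{v}$. Then $V\neq 0$ and $R(x_d^* )V=0$, where $R(x_d)$ is the hidden variable tensor Dixon resultant; i.e. $x_d^*$ is an eigenvalue of $R(x_d)$ with eigenvector $V$.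
   Context: Kronecker block determinant: for a $d\times d$ array $M=(M_{ij})$ with $M_{ij}\in\mathbb{C}^{n_i\times n_i}$ (possibly depending polynomially on variables), $|M|_\otimes=\sum_{\sigma\in S_d}\mathrm{sgn}(\sigma)\,M_{1,\sigma(1)}\otimes\cdots\otimes M_{d,\sigma(d)}$, an $N\times N$ matrix. Tensor Dixon function (with $x_d$ hidden): with variables $s_1,\dots,s_{d-1},t_1,\dots,t_{d-1},x_d$, let $M_{ij}=P_i(t_1,\dots,t_{j-1},s_j,\dots,s_{d-1},x_d)$ for $1\le i,j\le d$, and $f_{\text{Dixon}}=|M|_\otimes/\prod_{i=1}^{d-1}(s_i-t_i)$, a matrix polynomial of degree at most $\alpha_i=i\tau_i-1$ in $s_i$ and at most $\beta_i=(d-i)\tau_i-1$ in $t_i$. Expand $f_{\text{Dixon}}=\sum_{\mathbf{i},\mathbf{j}}A_{\mathbf{i},\mathbf{j}}(x_d)\prod_k s_k^{i_k}\prod_k t_k^{j_k}$ over $0\le i_k\le\alpha_k$, $0\le j_k\le\beta_k$, with $A_{\mathbf{i},\mathbf{j}}(x_d)$ an $N\times N$ matrix polynomial in $x_d$. The hidden variable tensor Dixon resultant $R(x_d)$ is the square block matrix whose block columns (width $N$) are indexed by the $s$-exponents $\mathbf{i}$ and block rows (height $N$) by the $t$-exponents $\mathbf{j}$ (in fixed orderings), with block $(\mathbf{j},\mathbf{i})$ equal to $A_{\mathbf{i},\mathbf{j}}(x_d)$. *)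

theory Defs
  imports Complex_Main "HOL-Combinatorics.Combinatorics" "HOL-Library.FuncSet"
begin

text \<open>
A matrix polynomial P_i in d variables with matrix coefficients of size
n_i x n_i is given by its coefficient function Pc i :: (nat => nat) => nat => nat => complex,
where Pc i e a b is entry (a,b) (0-based, a,b < n_i) of the coefficient of
x_1^(e 1) ... x_d^(e d), for exponent vectors e with 0 <= e k <= tau k.
Points of C^d are functions x :: nat => complex using the entries x 1, ..., x d.
Rows/columns of an N x N Kronecker product (N = n_1 ... n_d) are indexed by
multi-indices r with r k < n k (k = 1..d); the entry of A_1 (x) ... (x) A_d at (r,c)
is the product of the entries A_k (r k, c k).
\<close>

definition exps :: "nat \<Rightarrow> (nat \<Rightarrow> nat) \<Rightarrow> (nat \<Rightarrow> nat) set" where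
  "exps d tau = (PiE {1..d} (\<lambda>k. {0..tau k}))"

definition mpoly_eval :: "nat \<Rightarrow> (nat \<Rightarrow> nat) \<Rightarrow> ((nat \<Rightarrow> nat) \<Rightarrow> nat \<Rightarrow> nat \<Rightarrow> complex)
    \<Rightarrow> (nat \<Rightarrow> complex) \<Rightarrow> nat \<Rightarrow> nat \<Rightarrow> complex" where
  "mpoly_eval d tau C x a b = (\<Sum>e\<in>exps d tau. C e a b * (\<Prod>k\<in>{1..d}. x k ^ e k))"

definition kidx :: "nat \<Rightarrow> (nat \<Rightarrow> nat) \<Rightarrow> (nat \<Rightarrow> nat) set" where
  "kidx d n = PiE {1..d} (\<lambda>k. {..<n k})"

definition ktensor_vec :: "nat \<Rightarrow> (nat \<Rightarrow> nat \<Rightarrow> complex) \<Rightarrow> (nat \<Rightarrow> nat) \<Rightarrow> complex" where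
  "ktensor_vec d v r = (\<Prod>k\<in>{1..d}. v k (r k))"

text \<open>argument (t_1,...,t_{j-1}, s_j, ..., s_{d-1}, x_d) of P_i in the entry M_ij\<close>
definition dixon_arg :: "nat \<Rightarrow> nat \<Rightarrow> (nat \<Rightarrow> complex) \<Rightarrow> (nat \<Rightarrow> complex) \<Rightarrow> complex
    \<Rightarrow> nat \<Rightarrow> complex" where
  "dixon_arg d j s t xd k = (if k < j then t k else if k < d then s k else xd)"

text \<open>entry (r,c) of the Kronecker block determinant |M|_(x) with
  M_ij = P_i(t_1,...,t_{j-1},s_j,...,s_{d-1},x_d)\<close>
definition tensor_det :: "nat \<Rightarrow> (nat \<Rightarrow> nat) \<Rightarrow> (nat \<Rightarrow> (nat \<Rightarrow> nat) \<Rightarrow> nat \<Rightarrow> nat \<Rightarrow> complex)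
    \<Rightarrow> (nat \<Rightarrow> complex) \<Rightarrow> (nat \<Rightarrow> complex) \<Rightarrow> complex \<Rightarrow> (nat \<Rightarrow> nat) \<Rightarrow> (nat \<Rightarrow> nat) \<Rightarrow> complex" where
  "tensor_det d tau Pc s t xd r c =
     (\<Sum>\<sigma>\<in>{\<sigma>. \<sigma> permutes {1..d}}. of_int (sign \<sigma>) *
        (\<Prod>i\<in>{1..d}. mpoly_eval d tau (Pc i) (dixon_arg d (\<sigma> i) s t xd) (r i) (c i)))"

text \<open>degree bounds alpha_k = k tau_k - 1, beta_k = (d-k) tau_k - 1 and the
  s-exponent (block column) and t-exponent (block row) index sets\<close>
definition s_exps :: "nat \<Rightarrow> (nat \<Rightarrow> nat) \<Rightarrow> (nat \<Rightarrow> nat) set" where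
  "s_exps d tau = PiE {1..d-1} (\<lambda>k. {0..k * tau k - 1})"

definition t_exps :: "nat \<Rightarrow> (nat \<Rightarrow> nat) \<Rightarrow> (nat \<Rightarrow> nat) set" where
  "t_exps d tau = PiE {1..d-1} (\<lambda>k. {0..(d - k) * tau k - 1})"

text \<open>The coefficients A_{i,j}(x_d) (entry (r,c)) of
  f_Dixon = |M|_(x) / prod_k (s_k - t_k) = sum_{i,j} A_{i,j}(x_d) s^i t^j,
  characterised (uniquely, by uniqueness of polynomial coefficients) by
  prod_k (s_k - t_k) * sum_{i,j} A_{i,j}(x_d) s^i t^j = |M|_(x) for all s, t.\<close>
definition dixon_coeffs :: "nat \<Rightarrow> (nat \<Rightarrow> nat) \<Rightarrow> (nat \<Rightarrow> nat)
    \<Rightarrow> (nat \<Rightarrow> (nat \<Rightarrow> nat) \<Rightarrow> nat \<Rightarrow> nat \<Rightarrow> complex) \<Rightarrow> complex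
    \<Rightarrow> (nat \<Rightarrow> nat) \<Rightarrow> (nat \<Rightarrow> nat) \<Rightarrow> (nat \<Rightarrow> nat) \<Rightarrow> (nat \<Rightarrow> nat) \<Rightarrow> complex" where
  "dixon_coeffs d tau n Pc xd = (SOME A. \<forall>s t. \<forall>r\<in>kidx d n. \<forall>c\<in>kidx d n.
      (\<Prod>k\<in>{1..d-1}. s k - t k) *
      (\<Sum>i\<in>s_exps d tau. \<Sum>j\<in>t_exps d tau.
          A i j r c * (\<Prod>k\<in>{1..d-1}. s k ^ i k) * (\<Prod>k\<in>{1..d-1}. t k ^ j k))
      = tensor_det d tau Pc s t xd r c)"

text \<open>Hidden variable tensor Dixon resultant R(x_d): block (j,i) (block row j in t_exps,
  block column i in s_exps) is A_{i,j}(x_d); entry ((j,r),(i,c)) is A_{i,j}(x_d)(r,c).\<close>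
definition dixon_resultant :: "nat \<Rightarrow> (nat \<Rightarrow> nat) \<Rightarrow> (nat \<Rightarrow> nat)
    \<Rightarrow> (nat \<Rightarrow> (nat \<Rightarrow> nat) \<Rightarrow> nat \<Rightarrow> nat \<Rightarrow> complex) \<Rightarrow> complex
    \<Rightarrow> ((nat \<Rightarrow> nat) \<times> (nat \<Rightarrow> nat)) \<Rightarrow> ((nat \<Rightarrow> nat) \<times> (nat \<Rightarrow> nat)) \<Rightarrow> complex" where
  "dixon_resultant d tau n Pc xd = (\<lambda>(j, r) (i, c). dixon_coeffs d tau n Pc xd i j r c)"

definition dixon_mult_vec :: "nat \<Rightarrow> (nat \<Rightarrow> nat) \<Rightarrow> (nat \<Rightarrow> nat)
    \<Rightarrow> (((nat \<Rightarrow> nat) \<times> (nat \<Rightarrow> nat)) \<Rightarrow> ((nat \<Rightarrow> nat) \<times> (nat \<Rightarrow> nat)) \<Rightarrow> complex)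
    \<Rightarrow> ((nat \<Rightarrow> nat) \<times> (nat \<Rightarrow> nat) \<Rightarrow> complex)
    \<Rightarrow> (nat \<Rightarrow> nat) \<times> (nat \<Rightarrow> nat) \<Rightarrow> complex" where
  "dixon_mult_vec d tau n Rm W = (\<lambda>jr. \<Sum>i\<in>s_exps d tau. \<Sum>c\<in>kidx d n. Rm jr (i, c) * W (i, c))"

end

theory Submission
  imports Defs "HOL-Computational_Algebra.Polynomial"
begin

text \<open>
  Entry (r, c) of the Kronecker block determinant |M| is the ordinary determinant of the scalar
  d x d matrix whose (i, l) entry is entry (r_i, c_i) of P_i at the argument of block column l.
  Neighbouring columns differ in one argument only (s_l in column l, t_l in column l + 1), so
  subtracting neighbouring columns divides out prod_k (s_k - t_k). Subtracting towards the right
  leaves a quotient with s-degrees at most alpha_k, subtracting towards the left one with t-degrees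
  at most beta_k; the two quotients agree whenever no s_k equals t_k, so by uniqueness of
  coefficients both bounds hold, and the coefficients A_{i,j} defining R exist.

  At s = x*, block column 1 of M is (P_i(x*))_i, so every term of |M| annihilates
  v = v_1 (x) ... (x) v_d. Hence sum_j (R(x*_d) V)_j t^j = |M|(x*, t) v / prod_k (x*_k - t_k)
  vanishes whenever every t_k differs from x*_k, and so does each of its coefficients.
\<close>

section \<open>Polynomial functions with bounded exponents\<close>

definition exp_box :: "nat set \<Rightarrow> (nat \<Rightarrow> nat) \<Rightarrow> (nat \<Rightarrow> nat) set" where
  "exp_box K B = PiE K (\<lambda>k. {0..B k})"

definition poly_eval :: "nat set \<Rightarrow> (nat \<Rightarrow> nat) \<Rightarrow> ((nat \<Rightarrow> nat) \<Rightarrow> 'a::comm_semiring_1)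
    \<Rightarrow> (nat \<Rightarrow> 'a) \<Rightarrow> 'a" where
  "poly_eval K B c x = (\<Sum>e\<in>exp_box K B. c e * (\<Prod>k\<in>K. x k ^ e k))"

definition bipoly_eval :: "nat set \<Rightarrow> (nat \<Rightarrow> nat) \<Rightarrow> (nat \<Rightarrow> nat)
    \<Rightarrow> ((nat \<Rightarrow> nat) \<Rightarrow> (nat \<Rightarrow> nat) \<Rightarrow> 'a::comm_semiring_1) \<Rightarrow> (nat \<Rightarrow> 'a) \<Rightarrow> (nat \<Rightarrow> 'a) \<Rightarrow> 'a" where
  "bipoly_eval K Bs Bt c s t =
     (\<Sum>i\<in>exp_box K Bs. \<Sum>j\<in>exp_box K Bt. c i j * (\<Prod>k\<in>K. s k ^ i k) * (\<Prod>k\<in>K. t k ^ j k))"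

definition is_bipoly :: "nat set \<Rightarrow> (nat \<Rightarrow> nat) \<Rightarrow> (nat \<Rightarrow> nat)
    \<Rightarrow> ((nat \<Rightarrow> 'a::comm_semiring_1) \<Rightarrow> (nat \<Rightarrow> 'a) \<Rightarrow> 'a) \<Rightarrow> bool" where
  "is_bipoly K Bs Bt f \<longleftrightarrow> (\<exists>c. f = bipoly_eval K Bs Bt c)"

lemma finite_exp_box [simp]: "finite K \<Longrightarrow> finite (exp_box K B)"
  unfolding exp_box_def by (intro finite_PiE) auto

lemma exp_box_mono: "(\<And>k. k \<in> K \<Longrightarrow> B k \<le> B' k) \<Longrightarrow> exp_box K B \<subseteq> exp_box K B'"
  unfolding exp_box_def by (rule PiE_mono) auto

lemma exp_box_add:
  "i \<in> exp_box K B \<Longrightarrow> i' \<in> exp_box K B' \<Longrightarrow>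
     restrict (\<lambda>k. i k + i' k) K \<in> exp_box K (\<lambda>k. B k + B' k)"
  unfolding exp_box_def by (auto simp: PiE_iff add_mono)

lemma bipoly_eval_swap:
  "bipoly_eval K Bs Bt c s t = poly_eval K Bt (\<lambda>j. poly_eval K Bs (\<lambda>i. c i j) s) t"
  unfolding bipoly_eval_def poly_eval_def
  by (subst sum.swap) (simp add: sum_distrib_left mult_ac)

lemma is_bipoly_zero: "is_bipoly K Bs Bt (\<lambda>s t. 0)"
  unfolding is_bipoly_def bipoly_eval_def by (intro exI[of _ "\<lambda>i j. 0"]) auto

lemma is_bipoly_add:
  assumes "is_bipoly K Bs Bt f" "is_bipoly K Bs Bt g"
  shows "is_bipoly K Bs Bt (\<lambda>s t. f s t + g s t)"
proof -
  obtain a b where "f = bipoly_eval K Bs Bt a" "g = bipoly_eval K Bs Bt b"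
    using assms unfolding is_bipoly_def by blast
  then show ?thesis unfolding is_bipoly_def bipoly_eval_def
    by (intro exI[of _ "\<lambda>i j. a i j + b i j"]) (auto simp: distrib_right sum.distrib)
qed

lemma is_bipoly_cmult:
  assumes "is_bipoly K Bs Bt f"
  shows "is_bipoly K Bs Bt (\<lambda>s t. z * f s t)"
proof -
  obtain a where "f = bipoly_eval K Bs Bt a"
    using assms unfolding is_bipoly_def by blast
  then show ?thesis unfolding is_bipoly_def bipoly_eval_def
    by (intro exI[of _ "\<lambda>i j. z * a i j"]) (auto simp: sum_distrib_left mult.assoc)
qed

lemma is_bipoly_sum:
  assumes "finite X" "\<And>x. x \<in> X \<Longrightarrow> is_bipoly K Bs Bt (f x)"
  shows "is_bipoly K Bs Bt (\<lambda>s t. \<Sum>x\<in>X. f x s t)"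
  using assms by (induction X rule: finite_induct) (auto intro: is_bipoly_zero is_bipoly_add)

lemma is_bipoly_monomial:
  assumes "finite K" "i \<in> exp_box K Bs" "j \<in> exp_box K Bt"
  shows "is_bipoly K Bs Bt (\<lambda>s t. z * (\<Prod>k\<in>K. s k ^ i k) * (\<Prod>k\<in>K. t k ^ j k))"
  unfolding is_bipoly_def bipoly_eval_def
proof (intro exI[of _ "\<lambda>i' j'. if j' = j then if i' = i then z else 0 else 0"] ext)
  fix s t :: "nat \<Rightarrow> 'a"
  show "z * (\<Prod>k\<in>K. s k ^ i k) * (\<Prod>k\<in>K. t k ^ j k) =
    (\<Sum>i'\<in>exp_box K Bs. \<Sum>j'\<in>exp_box K Bt. (if j' = j then if i' = i then z else 0 else 0) *
       (\<Prod>k\<in>K. s k ^ i' k) * (\<Prod>k\<in>K. t k ^ j' k))"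
  proof -
    have "(if j' = j then if i' = i then z else 0 else 0) * S * T
        = (if j' = j then if i' = i then z * S * T else 0 else 0)" for i' j' and S T :: 'a
      by simp
    then show ?thesis using assms by (simp add: sum.delta')
  qed
qed

lemma is_bipoly_mono:
  assumes "finite K" "is_bipoly K Bs Bt f"
    and "\<And>k. k \<in> K \<Longrightarrow> Bs k \<le> Bs' k" "\<And>k. k \<in> K \<Longrightarrow> Bt k \<le> Bt' k"
  shows "is_bipoly K Bs' Bt' f"
proof -
  obtain c where "f = bipoly_eval K Bs Bt c"
    using assms(2) unfolding is_bipoly_def by blast
  moreover have "exp_box K Bs \<subseteq> exp_box K Bs'" "exp_box K Bt \<subseteq> exp_box K Bt'"
    using assms(3,4) by (simp_all add: exp_box_mono)
  ultimately show ?thesis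
    unfolding bipoly_eval_def using assms(1)
    by (auto intro!: is_bipoly_sum is_bipoly_monomial)
qed

lemma is_bipoly_mult:
  assumes "finite K" "is_bipoly K Bs Bt f" "is_bipoly K Bs' Bt' g"
  shows "is_bipoly K (\<lambda>k. Bs k + Bs' k) (\<lambda>k. Bt k + Bt' k) (\<lambda>s t. f s t * g s t)"
proof -
  obtain a b where ab: "f = bipoly_eval K Bs Bt a" "g = bipoly_eval K Bs' Bt' b"
    using assms(2,3) unfolding is_bipoly_def by blast
  let ?add = "\<lambda>i i'. restrict (\<lambda>k. i k + i' k) K"
  have "(\<lambda>s t. f s t * g s t) = (\<lambda>s t. \<Sum>i\<in>exp_box K Bs. \<Sum>i'\<in>exp_box K Bs'.
      \<Sum>j\<in>exp_box K Bt. \<Sum>j'\<in>exp_box K Bt'.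
      (a i j * b i' j') * (\<Prod>k\<in>K. s k ^ ?add i i' k) * (\<Prod>k\<in>K. t k ^ ?add j j' k))"
    unfolding ab bipoly_eval_def sum_product
    by (intro ext sum.cong refl) (simp add: power_add prod.distrib mult_ac)
  then show ?thesis
    by (simp only:) (intro is_bipoly_sum is_bipoly_monomial exp_box_add finite_exp_box assms(1))
qed

lemma is_bipoly_prod:
  assumes "finite K" "finite X" "\<And>x. x \<in> X \<Longrightarrow> is_bipoly K (Bs x) (Bt x) (f x)"
  shows "is_bipoly K (\<lambda>k. \<Sum>x\<in>X. Bs x k) (\<lambda>k. \<Sum>x\<in>X. Bt x k) (\<lambda>s t. \<Prod>x\<in>X. f x s t)"
  using assms(2,3)
proof (induction X rule: finite_induct)
  case empty
  have "restrict (\<lambda>k. 0) K \<in> exp_box K (\<lambda>k. 0)"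
    unfolding exp_box_def by auto
  from is_bipoly_monomial[OF assms(1) this this, of 1] show ?case by simp
next
  case (insert x X)
  then show ?case by (simp add: is_bipoly_mult[OF assms(1)])
qed

lemma sum_powers_eq_0_imp_coeffs_eq_0:
  fixes c :: "nat \<Rightarrow> 'a::idom"
  assumes "infinite A" "\<And>z. z \<in> A \<Longrightarrow> (\<Sum>y\<in>{0..m}. c y * z ^ y) = 0"
  shows "\<forall>y\<in>{0..m}. c y = 0"
proof -
  define p where "p = (\<Sum>y\<in>{0..m}. monom (c y) y)"
  have "A \<subseteq> {z. poly p z = 0}"
    using assms(2) by (auto simp: p_def poly_sum poly_monom)
  then have "p = 0"
    using assms(1) poly_roots_finite finite_subset by blast
  moreover have "coeff p y = c y" if "y \<le> m" for y
    using that by (simp add: p_def coeff_sum coeff_monom)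
  ultimately show ?thesis by auto
qed

lemma exp_box_insert:
  "exp_box (insert a K) B = (\<lambda>(y, g). g(a := y)) ` ({0..B a} \<times> exp_box K B)"
  unfolding exp_box_def by (rule PiE_insert_eq)

lemma poly_eval_insert:
  assumes "finite K" "a \<notin> K"
  shows "poly_eval (insert a K) B c x = poly_eval K B (\<lambda>g. \<Sum>y\<in>{0..B a}. c (g(a := y)) * x a ^ y) x"
proof -
  have inj: "inj_on (\<lambda>(y, g). g(a := y)) ({0..B a} \<times> exp_box K B)"
    unfolding exp_box_def using assms(2) by (rule inj_combinator)
  have K: "(\<Prod>k\<in>K. x k ^ (if k = a then y else g k)) = (\<Prod>k\<in>K. x k ^ g k)" for g y
    using assms(2) by (intro prod.cong) auto
  have "poly_eval (insert a K) B c x = (\<Sum>(y, g)\<in>{0..B a} \<times> exp_box K B.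
      c (g(a := y)) * (x a ^ y * (\<Prod>k\<in>K. x k ^ g k)))"
    unfolding poly_eval_def exp_box_insert sum.reindex[OF inj]
    using assms by (intro sum.cong refl) (auto simp: K)
  also have "\<dots> = (\<Sum>y\<in>{0..B a}. \<Sum>g\<in>exp_box K B. c (g(a := y)) * (x a ^ y * (\<Prod>k\<in>K. x k ^ g k)))"
    by (rule sum.cartesian_product[symmetric])
  also have "\<dots> = poly_eval K B (\<lambda>g. \<Sum>y\<in>{0..B a}. c (g(a := y)) * x a ^ y) x"
    unfolding poly_eval_def by (subst sum.swap) (simp add: sum_distrib_right mult.assoc)
  finally show ?thesis .
qed

lemma poly_eval_eq_0_imp_coeffs_eq_0:
  fixes c :: "(nat \<Rightarrow> nat) \<Rightarrow> 'a::idom"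
  assumes "finite K" "\<And>k. k \<in> K \<Longrightarrow> infinite (A k)"
    and "\<And>x. x \<in> Pi K A \<Longrightarrow> poly_eval K B c x = 0"
  shows "\<forall>e\<in>exp_box K B. c e = 0"
  using assms
proof (induction K arbitrary: c rule: finite_induct)
  case empty
  have "poly_eval {} B c undefined = 0"
    by (rule empty.prems(2)) auto
  then show ?case by (simp add: poly_eval_def exp_box_def)
next
  case (insert a K)
  have "\<forall>g\<in>exp_box K B. (\<Sum>y\<in>{0..B a}. c (g(a := y)) * z ^ y) = 0" if "z \<in> A a" for z
  proof (rule insert.IH)
    fix x assume "x \<in> Pi K A"
    then have "poly_eval (insert a K) B c (x(a := z)) = 0"
      using that by (intro insert.prems(2)) auto
    moreover have "(\<Prod>k\<in>K. (x(a := z)) k ^ g k) = (\<Prod>k\<in>K. x k ^ g k)" for g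
      using insert.hyps(2) by (intro prod.cong) auto
    ultimately show "poly_eval K B (\<lambda>g. \<Sum>y\<in>{0..B a}. c (g(a := y)) * z ^ y) x = 0"
      unfolding poly_eval_insert[OF insert.hyps] by (simp add: poly_eval_def)
  qed (use insert.prems in auto)
  then have "c (g(a := y)) = 0" if "g \<in> exp_box K B" "y \<in> {0..B a}" for g y
    using sum_powers_eq_0_imp_coeffs_eq_0[of "A a" "\<lambda>y. c (g(a := y))" "B a"] that insert.prems(1)
    by auto
  then show ?case unfolding exp_box_insert by auto
qed

lemma bipoly_eval_eq_0_imp_coeffs_eq_0:
  fixes c :: "(nat \<Rightarrow> nat) \<Rightarrow> (nat \<Rightarrow> nat) \<Rightarrow> 'a::idom"
  assumes "finite K" "\<And>k. k \<in> K \<Longrightarrow> infinite (As k)" "\<And>k. k \<in> K \<Longrightarrow> infinite (At k)"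
    and "\<And>s t. s \<in> Pi K As \<Longrightarrow> t \<in> Pi K At \<Longrightarrow> bipoly_eval K Bs Bt c s t = 0"
  shows "\<forall>i\<in>exp_box K Bs. \<forall>j\<in>exp_box K Bt. c i j = 0"
proof (intro ballI)
  fix i j assume i: "i \<in> exp_box K Bs" and j: "j \<in> exp_box K Bt"
  have "\<forall>j\<in>exp_box K Bt. poly_eval K Bs (\<lambda>i. c i j) s = 0"
    if "s \<in> Pi K As" for s
  proof (rule poly_eval_eq_0_imp_coeffs_eq_0[OF assms(1,3)])
    fix t assume "t \<in> Pi K At"
    then show "poly_eval K Bt (\<lambda>j. poly_eval K Bs (\<lambda>i. c i j) s) t = 0"
      using assms(4)[OF that] by (simp add: bipoly_eval_swap)
  qed
  then have "\<forall>i\<in>exp_box K Bs. c i j = 0"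
    using assms(1,2) j by (intro poly_eval_eq_0_imp_coeffs_eq_0) auto
  then show "c i j = 0" using i by blast
qed

lemma bipoly_eval_zero_pad:
  fixes c :: "(nat \<Rightarrow> nat) \<Rightarrow> (nat \<Rightarrow> nat) \<Rightarrow> 'a::comm_semiring_1"
  assumes "finite K" "exp_box K Bs \<subseteq> exp_box K Bs'" "exp_box K Bt \<subseteq> exp_box K Bt'"
  shows "bipoly_eval K Bs' Bt' (\<lambda>i j. if i \<in> exp_box K Bs \<and> j \<in> exp_box K Bt then c i j else 0)
    = bipoly_eval K Bs Bt c"
  unfolding bipoly_eval_def using assms
  by (intro ext sum.mono_neutral_cong_right) (auto intro!: sum.mono_neutral_cong_right)

lemma is_bipoly_min_degrees:
  fixes f g :: "(nat \<Rightarrow> 'a::idom) \<Rightarrow> (nat \<Rightarrow> 'a) \<Rightarrow> 'a"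
  assumes "finite K" "is_bipoly K Bs Bt' f" "is_bipoly K Bs' Bt g"
    and "\<And>k. k \<in> K \<Longrightarrow> Bs k \<le> Bs' k" "\<And>k. k \<in> K \<Longrightarrow> Bt k \<le> Bt' k"
    and "\<And>k. k \<in> K \<Longrightarrow> infinite (As k)" "\<And>k. k \<in> K \<Longrightarrow> infinite (At k)"
    and "\<And>s t. s \<in> Pi K As \<Longrightarrow> t \<in> Pi K At \<Longrightarrow> f s t = g s t"
  shows "is_bipoly K Bs Bt f"
proof -
  obtain a b where ab: "f = bipoly_eval K Bs Bt' a" "g = bipoly_eval K Bs' Bt b"
    using assms(2,3) unfolding is_bipoly_def by blast
  have Bs: "exp_box K Bs \<subseteq> exp_box K Bs'" and Bt: "exp_box K Bt \<subseteq> exp_box K Bt'"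
    using assms(4,5) by (simp_all add: exp_box_mono)
  define a' where "a' i j = (if i \<in> exp_box K Bs \<and> j \<in> exp_box K Bt' then a i j else 0)" for i j
  define b' where "b' i j = (if i \<in> exp_box K Bs' \<and> j \<in> exp_box K Bt then b i j else 0)" for i j
  have "f = bipoly_eval K Bs' Bt' a'" "g = bipoly_eval K Bs' Bt' b'"
    unfolding ab a'_def b'_def using assms(1) Bs Bt by (simp_all add: bipoly_eval_zero_pad)
  then have "bipoly_eval K Bs' Bt' (\<lambda>i j. a' i j - b' i j) s t = 0"
    if "s \<in> Pi K As" "t \<in> Pi K At" for s t
    using assms(8)[OF that] by (simp add: bipoly_eval_def algebra_simps sum_subtractf)
  then have "\<forall>i\<in>exp_box K Bs'. \<forall>j\<in>exp_box K Bt'. a' i j - b' i j = 0"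
    using assms(1,6,7) by (intro bipoly_eval_eq_0_imp_coeffs_eq_0)
  then have "a i j = 0" if "i \<in> exp_box K Bs" "j \<in> exp_box K Bt' - exp_box K Bt" for i j
    using that Bs by (force simp: a'_def b'_def)
  then have "f = bipoly_eval K Bs Bt a"
    unfolding ab bipoly_eval_def using assms(1) Bt
    by (intro ext sum.cong refl sum.mono_neutral_right) auto
  then show ?thesis unfolding is_bipoly_def by blast
qed

section \<open>Leibniz determinants over a finite index set\<close>

definition leibniz_det :: "nat set \<Rightarrow> (nat \<Rightarrow> nat \<Rightarrow> 'a::comm_ring_1) \<Rightarrow> 'a" where
  "leibniz_det S m = (\<Sum>\<sigma>\<in>{\<sigma>. \<sigma> permutes S}. of_int (sign \<sigma>) * (\<Prod>i\<in>S. m i (\<sigma> i)))"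

lemma leibniz_det_cong:
  "(\<And>i l. i \<in> S \<Longrightarrow> l \<in> S \<Longrightarrow> m i l = m' i l) \<Longrightarrow> leibniz_det S m = leibniz_det S m'"
  unfolding leibniz_det_def
  by (intro sum.cong refl arg_cong2[where f="(*)"] prod.cong) (auto simp: permutes_in_image)

lemma leibniz_det_diff_col:
  assumes "finite S" "j \<in> S"
    and "\<And>i l. i \<in> S \<Longrightarrow> l \<in> S \<Longrightarrow> l \<noteq> j \<Longrightarrow> m1 i l = m i l \<and> m2 i l = m i l"
    and "\<And>i. i \<in> S \<Longrightarrow> m i j = m1 i j - m2 i j"
  shows "leibniz_det S m = leibniz_det S m1 - leibniz_det S m2"
proof -
  have "(\<Prod>i\<in>S. m i (\<sigma> i)) = (\<Prod>i\<in>S. m1 i (\<sigma> i)) - (\<Prod>i\<in>S. m2 i (\<sigma> i))"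
    if \<sigma>: "\<sigma> permutes S" for \<sigma>
  proof -
    define i0 where "i0 = inv \<sigma> j"
    have i0: "i0 \<in> S" "\<sigma> i0 = j"
      unfolding i0_def using assms(2) permutes_inverses(1)[OF \<sigma>] permutes_in_image[OF permutes_inv[OF \<sigma>]]
      by auto
    have "\<sigma> i \<noteq> j" if "i \<in> S - {i0}" for i
      using that i0 permutes_inj[OF \<sigma>] by (auto dest: injD)
    then have "(\<Prod>i\<in>S - {i0}. m1 i (\<sigma> i)) = (\<Prod>i\<in>S - {i0}. m i (\<sigma> i))"
        "(\<Prod>i\<in>S - {i0}. m2 i (\<sigma> i)) = (\<Prod>i\<in>S - {i0}. m i (\<sigma> i))"
      using assms(3) permutes_in_image[OF \<sigma>] by (auto intro!: prod.cong)
    then show ?thesis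
      using prod.remove[OF assms(1) i0(1), of "\<lambda>i. m i (\<sigma> i)"]
        prod.remove[OF assms(1) i0(1), of "\<lambda>i. m1 i (\<sigma> i)"]
        prod.remove[OF assms(1) i0(1), of "\<lambda>i. m2 i (\<sigma> i)"] i0 assms(4)[OF i0(1)]
      by (simp add: algebra_simps)
  qed
  then show ?thesis
    unfolding leibniz_det_def by (simp add: right_diff_distrib sum_subtractf)
qed

lemma leibniz_det_two_equal_cols:
  fixes m :: "nat \<Rightarrow> nat \<Rightarrow> 'a::{idom,ring_char_0}"
  assumes "finite S" "a \<in> S" "b \<in> S" "a \<noteq> b" "\<And>i. i \<in> S \<Longrightarrow> m i a = m i b"
  shows "leibniz_det S m = 0"
proof -
  let ?\<tau> = "transpose a b"
  let ?f = "\<lambda>\<sigma>. of_int (sign \<sigma>) * (\<Prod>i\<in>S. m i (\<sigma> i))"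
  have "?f (?\<tau> \<circ> \<sigma>) = - ?f \<sigma>" if \<sigma>: "\<sigma> permutes S" for \<sigma>
  proof -
    have "sign (?\<tau> \<circ> \<sigma>) = - sign \<sigma>"
      using sign_compose[OF permutation_swap_id permutes_imp_permutation[OF assms(1) \<sigma>]] assms(4)
      by (simp add: sign_swap_id)
    moreover have "m i (?\<tau> (\<sigma> i)) = m i (\<sigma> i)" if "i \<in> S" for i
      using assms(5)[OF that] by (auto simp: transpose_def)
    ultimately show ?thesis by simp
  qed
  then have "leibniz_det S m = - leibniz_det S m"
    unfolding leibniz_det_def
    using setum_permutations_compose_left[OF permutes_swap_id[OF assms(2,3)], of ?f]
    by (simp add: sum_negf)
  then show ?thesis by simp
qed

lemma leibniz_det_sub_col:
  fixes m :: "nat \<Rightarrow> nat \<Rightarrow> 'a::{idom,ring_char_0}"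
  assumes "finite S" "j \<in> S" "j' \<in> S" "j \<noteq> j'"
  shows "leibniz_det S (\<lambda>i l. if l = j then m i j - m i j' else m i l) = leibniz_det S m"
proof -
  have "leibniz_det S (\<lambda>i l. if l = j then m i j - m i j' else m i l)
      = leibniz_det S m - leibniz_det S (\<lambda>i l. if l = j then m i j' else m i l)"
    using assms(1,2) by (rule leibniz_det_diff_col) auto
  moreover have "leibniz_det S (\<lambda>i l. if l = j then m i j' else m i l) = 0"
    using assms by (intro leibniz_det_two_equal_cols[of S j j']) auto
  ultimately show ?thesis by simp
qed

lemma leibniz_det_scale_cols:
  assumes "finite S" "\<And>i l. i \<in> S \<Longrightarrow> l \<in> S \<Longrightarrow> m i l = w l * q i l"
  shows "leibniz_det S m = (\<Prod>l\<in>S. w l) * leibniz_det S q"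
proof -
  have "(\<Prod>i\<in>S. m i (\<sigma> i)) = (\<Prod>l\<in>S. w l) * (\<Prod>i\<in>S. q i (\<sigma> i))"
    if \<sigma>: "\<sigma> permutes S" for \<sigma>
  proof -
    have "(\<Prod>i\<in>S. m i (\<sigma> i)) = (\<Prod>i\<in>S. w (\<sigma> i)) * (\<Prod>i\<in>S. q i (\<sigma> i))"
      using assms(2) permutes_in_image[OF \<sigma>] by (auto simp: prod.distrib[symmetric] intro!: prod.cong)
    also have "(\<Prod>i\<in>S. w (\<sigma> i)) = (\<Prod>l\<in>S. w l)"
      using prod.permute[OF \<sigma>, of w] by (simp add: comp_def)
    finally show ?thesis .
  qed
  then show ?thesis
    unfolding leibniz_det_def by (simp add: sum_distrib_left mult_ac)
qed

lemma leibniz_det_forward_diffs: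
  fixes m :: "nat \<Rightarrow> nat \<Rightarrow> 'a::{idom,ring_char_0}"
  shows "k < d \<Longrightarrow>
    leibniz_det {1..d} (\<lambda>i l. if l \<le> k then m i l - m i (Suc l) else m i l) = leibniz_det {1..d} m"
proof (induction k)
  case 0
  show ?case by (rule leibniz_det_cong) auto
next
  case (Suc k)
  let ?m = "\<lambda>i l. if l \<le> k then m i l - m i (Suc l) else m i l"
  have "leibniz_det {1..d} (\<lambda>i l. if l \<le> Suc k then m i l - m i (Suc l) else m i l)
      = leibniz_det {1..d} (\<lambda>i l. if l = Suc k then ?m i (Suc k) - ?m i (Suc (Suc k)) else ?m i l)"
    by (rule leibniz_det_cong) auto
  also have "\<dots> = leibniz_det {1..d} ?m"
    using Suc.prems by (intro leibniz_det_sub_col) auto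
  finally show ?case using Suc by simp
qed

lemma leibniz_det_backward_diffs:
  fixes m :: "nat \<Rightarrow> nat \<Rightarrow> 'a::{idom,ring_char_0}"
  shows "k < d \<Longrightarrow>
    leibniz_det {1..d} (\<lambda>i l. if d - k < l then m i l - m i (l - 1) else m i l) = leibniz_det {1..d} m"
proof (induction k)
  case 0
  show ?case by (rule leibniz_det_cong) auto
next
  case (Suc k)
  let ?m = "\<lambda>i l. if d - k < l then m i l - m i (l - 1) else m i l"
  have "leibniz_det {1..d} (\<lambda>i l. if d - Suc k < l then m i l - m i (l - 1) else m i l)
      = leibniz_det {1..d} (\<lambda>i l. if l = d - k then ?m i (d - k) - ?m i (d - k - 1) else ?m i l)"
    using Suc.prems by (intro leibniz_det_cong) auto
  also have "\<dots> = leibniz_det {1..d} ?m"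
    using Suc.prems by (intro leibniz_det_sub_col) auto
  finally show ?case using Suc by simp
qed

lemma is_bipoly_leibniz_det:
  assumes "finite K" "finite S" "\<And>i l. i \<in> S \<Longrightarrow> l \<in> S \<Longrightarrow> is_bipoly K (Bs l) (Bt l) (q i l)"
  shows "is_bipoly K (\<lambda>k. \<Sum>l\<in>S. Bs l k) (\<lambda>k. \<Sum>l\<in>S. Bt l k) (\<lambda>s t. leibniz_det S (\<lambda>i l. q i l s t))"
  unfolding leibniz_det_def
proof (intro is_bipoly_sum is_bipoly_cmult)
  show "finite {\<sigma>. \<sigma> permutes S}" using finite_permutations[OF assms(2)] .
  fix \<sigma> assume "\<sigma> \<in> {\<sigma>. \<sigma> permutes S}"
  then have \<sigma>: "\<sigma> permutes S" by simp
  have "(\<Sum>l\<in>S. B l k) = (\<Sum>i\<in>S. B (\<sigma> i) k)" for B :: "nat \<Rightarrow> nat \<Rightarrow> nat" and k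
    using sum.permute[OF \<sigma>, of "\<lambda>l. B l k"] by (simp add: comp_def)
  moreover have "is_bipoly K (\<lambda>k. \<Sum>i\<in>S. Bs (\<sigma> i) k) (\<lambda>k. \<Sum>i\<in>S. Bt (\<sigma> i) k) (\<lambda>s t. \<Prod>i\<in>S. q i (\<sigma> i) s t)"
    using assms permutes_in_image[OF \<sigma>] by (intro is_bipoly_prod) auto
  ultimately show "is_bipoly K (\<lambda>k. \<Sum>l\<in>S. Bs l k) (\<lambda>k. \<Sum>l\<in>S. Bt l k) (\<lambda>s t. \<Prod>i\<in>S. q i (\<sigma> i) s t)"
    by simp
qed

section \<open>Column differences of the Dixon matrix\<close>

lemma mpoly_eval_eq_poly_eval: "mpoly_eval d tau P x a b = poly_eval {1..d} tau (\<lambda>e. P e a b) x"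
  unfolding mpoly_eval_def poly_eval_def exps_def exp_box_def ..

definition dixon_det :: "nat \<Rightarrow> (nat \<Rightarrow> nat) \<Rightarrow> (nat \<Rightarrow> (nat \<Rightarrow> nat) \<Rightarrow> complex) \<Rightarrow> complex
    \<Rightarrow> (nat \<Rightarrow> complex) \<Rightarrow> (nat \<Rightarrow> complex) \<Rightarrow> complex" where
  "dixon_det d tau C xd s t = leibniz_det {1..d} (\<lambda>i l. poly_eval {1..d} tau (C i) (dixon_arg d l s t xd))"

lemma tensor_det_eq_dixon_det:
  "tensor_det d tau Pc s t xd r c = dixon_det d tau (\<lambda>i e. Pc i e (r i) (c i)) xd s t"
  unfolding tensor_det_def dixon_det_def leibniz_det_def mpoly_eval_eq_poly_eval ..

definition dixon_quot :: "nat \<Rightarrow> (nat \<Rightarrow> nat) \<Rightarrow> ((nat \<Rightarrow> nat) \<Rightarrow> complex) \<Rightarrow> complex \<Rightarrow> nat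
    \<Rightarrow> (nat \<Rightarrow> complex) \<Rightarrow> (nat \<Rightarrow> complex) \<Rightarrow> complex" where
  "dixon_quot d tau c xd j s t = (\<Sum>e\<in>exp_box {1..d} tau. c e *
     ((\<Sum>m<e j. t j ^ (e j - Suc m) * s j ^ m) * (\<Prod>k\<in>{1..d} - {j}. dixon_arg d j s t xd k ^ e k)))"

lemma poly_eval_dixon_arg_diff:
  assumes "1 \<le> j" "j < d"
  shows "poly_eval {1..d} tau c (dixon_arg d j s t xd) - poly_eval {1..d} tau c (dixon_arg d (Suc j) s t xd)
    = (s j - t j) * dixon_quot d tau c xd j s t"
proof -
  have j: "j \<in> {1..d}" using assms by auto
  have per_exp: "(\<Prod>k\<in>{1..d}. dixon_arg d j s t xd k ^ e k) - (\<Prod>k\<in>{1..d}. dixon_arg d (Suc j) s t xd k ^ e k)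
      = (s j ^ e j - t j ^ e j) * (\<Prod>k\<in>{1..d} - {j}. dixon_arg d j s t xd k ^ e k)" for e
  proof -
    have "(\<Prod>k\<in>{1..d} - {j}. dixon_arg d (Suc j) s t xd k ^ e k)
        = (\<Prod>k\<in>{1..d} - {j}. dixon_arg d j s t xd k ^ e k)"
      by (rule prod.cong) (auto simp: dixon_arg_def)
    moreover have "dixon_arg d j s t xd j = s j" "dixon_arg d (Suc j) s t xd j = t j"
      using assms by (simp_all add: dixon_arg_def)
    ultimately show ?thesis
      using prod.remove[OF finite_atLeastAtMost j, of "\<lambda>k. dixon_arg d j s t xd k ^ e k"]
        prod.remove[OF finite_atLeastAtMost j, of "\<lambda>k. dixon_arg d (Suc j) s t xd k ^ e k"]
      by (simp add: left_diff_distrib)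
  qed
  have "poly_eval {1..d} tau c (dixon_arg d j s t xd) - poly_eval {1..d} tau c (dixon_arg d (Suc j) s t xd)
      = (\<Sum>e\<in>exp_box {1..d} tau. c e * ((s j ^ e j - t j ^ e j) *
          (\<Prod>k\<in>{1..d} - {j}. dixon_arg d j s t xd k ^ e k)))"
    unfolding poly_eval_def per_exp[symmetric] by (simp add: sum_subtractf right_diff_distrib)
  also have "\<dots> = (s j - t j) * dixon_quot d tau c xd j s t"
    unfolding dixon_quot_def power_diff_sumr2 sum_distrib_left[where A = "exp_box {1..d} tau"]
    by (simp only: mult_ac)
  finally show ?thesis .
qed

lemma prod_dixon_arg_eq:
  assumes "1 \<le> j" "j \<le> d"
  shows "(\<Prod>k\<in>{1..d}. dixon_arg d j s t xd k ^ e k) = xd ^ e d *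
    (\<Prod>k\<in>{1..d-1}. s k ^ (if j \<le> k then e k else 0)) * (\<Prod>k\<in>{1..d-1}. t k ^ (if k < j then e k else 0))"
proof -
  have top: "{1..d} = insert d {1..d-1}" using assms by auto
  have "(\<Prod>k\<in>{1..d}. dixon_arg d j s t xd k ^ e k)
      = dixon_arg d j s t xd d ^ e d * (\<Prod>k\<in>{1..d-1}. dixon_arg d j s t xd k ^ e k)"
    unfolding top by (rule prod.insert) auto
  also have "(\<Prod>k\<in>{1..d-1}. dixon_arg d j s t xd k ^ e k)
      = (\<Prod>k\<in>{1..d-1}. s k ^ (if j \<le> k then e k else 0) * t k ^ (if k < j then e k else 0))"
    by (rule prod.cong) (auto simp: dixon_arg_def)
  finally show ?thesis
    using assms by (simp add: dixon_arg_def prod.distrib mult.assoc)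
qed

lemma dixon_quot_term_eq:
  assumes "1 \<le> j" "j < d"
  shows "t j ^ (e j - Suc m) * s j ^ m * (\<Prod>k\<in>{1..d} - {j}. dixon_arg d j s t xd k ^ e k) = xd ^ e d *
    (\<Prod>k\<in>{1..d-1}. s k ^ (if k = j then m else if j < k then e k else 0)) *
    (\<Prod>k\<in>{1..d-1}. t k ^ (if k = j then e j - Suc m else if k < j then e k else 0))"
proof -
  let ?K = "{1..d-1}"
  let ?se = "\<lambda>k. if k = j then m else if j < k then e k else 0"
  let ?te = "\<lambda>k. if k = j then e j - Suc m else if k < j then e k else 0"
  have j: "j \<in> ?K" using assms by auto
  have top: "{1..d} - {j} = insert d (?K - {j})" using assms by auto
  have "(\<Prod>k\<in>{1..d} - {j}. dixon_arg d j s t xd k ^ e k)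
      = dixon_arg d j s t xd d ^ e d * (\<Prod>k\<in>?K - {j}. dixon_arg d j s t xd k ^ e k)"
    unfolding top by (rule prod.insert) auto
  also have "(\<Prod>k\<in>?K - {j}. dixon_arg d j s t xd k ^ e k) = (\<Prod>k\<in>?K - {j}. s k ^ ?se k * t k ^ ?te k)"
    by (rule prod.cong) (auto simp: dixon_arg_def)
  also have "dixon_arg d j s t xd d = xd"
    using assms by (simp add: dixon_arg_def)
  finally have "t j ^ (e j - Suc m) * s j ^ m * (\<Prod>k\<in>{1..d} - {j}. dixon_arg d j s t xd k ^ e k)
      = xd ^ e d * ((s j ^ m * t j ^ (e j - Suc m)) * (\<Prod>k\<in>?K - {j}. s k ^ ?se k * t k ^ ?te k))"
    by (simp only: mult_ac)
  also have "(s j ^ m * t j ^ (e j - Suc m)) * (\<Prod>k\<in>?K - {j}. s k ^ ?se k * t k ^ ?te k)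
      = (\<Prod>k\<in>?K. s k ^ ?se k * t k ^ ?te k)"
    using prod.remove[OF finite_atLeastAtMost j, of "\<lambda>k. s k ^ ?se k * t k ^ ?te k"] by simp
  finally show ?thesis
    by (simp add: prod.distrib mult.assoc)
qed

lemma is_bipoly_poly_eval_dixon_arg:
  assumes "1 \<le> j" "j \<le> d"
  shows "is_bipoly {1..d-1} (\<lambda>k. if j \<le> k then tau k else 0) (\<lambda>k. if k < j then tau k else 0)
    (\<lambda>s t. poly_eval {1..d} tau c (dixon_arg d j s t xd))"
proof -
  let ?K = "{1..d-1}"
  define se where "se e = restrict (\<lambda>k. if j \<le> k then e k else 0) ?K" for e :: "nat \<Rightarrow> nat"
  define te where "te e = restrict (\<lambda>k. if k < j then e k else 0) ?K" for e :: "nat \<Rightarrow> nat"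
  have eq: "(\<lambda>s t. poly_eval {1..d} tau c (dixon_arg d j s t xd)) = (\<lambda>s t.
      \<Sum>e\<in>exp_box {1..d} tau. (c e * xd ^ e d) * (\<Prod>k\<in>?K. s k ^ se e k) * (\<Prod>k\<in>?K. t k ^ te e k))"
    unfolding poly_eval_def prod_dixon_arg_eq[OF assms] se_def te_def by (simp add: mult.assoc)
  have "se e \<in> exp_box ?K (\<lambda>k. if j \<le> k then tau k else 0)"
      "te e \<in> exp_box ?K (\<lambda>k. if k < j then tau k else 0)" if "e \<in> exp_box {1..d} tau" for e
    using that by (auto simp: exp_box_def se_def te_def PiE_iff)
  then show ?thesis
    unfolding eq by (auto intro!: is_bipoly_sum is_bipoly_monomial)
qed

definition quot_s_deg :: "(nat \<Rightarrow> nat) \<Rightarrow> nat \<Rightarrow> nat \<Rightarrow> nat" where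
  "quot_s_deg tau j k = (if j < k then tau k else if k = j then tau k - 1 else 0)"

definition quot_t_deg :: "(nat \<Rightarrow> nat) \<Rightarrow> nat \<Rightarrow> nat \<Rightarrow> nat" where
  "quot_t_deg tau j k = (if k < j then tau k else if k = j then tau k - 1 else 0)"

lemma is_bipoly_dixon_quot:
  assumes "1 \<le> j" "j < d"
  shows "is_bipoly {1..d-1} (quot_s_deg tau j) (quot_t_deg tau j) (dixon_quot d tau c xd j)"
proof -
  let ?K = "{1..d-1}"
  define se where "se e m = restrict (\<lambda>k. if k = j then m else if j < k then e k else 0) ?K"
    for e :: "nat \<Rightarrow> nat" and m
  define te where "te e m = restrict (\<lambda>k. if k = j then e j - Suc m else if k < j then e k else 0) ?K"
    for e :: "nat \<Rightarrow> nat" and m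
  have eq: "dixon_quot d tau c xd j = (\<lambda>s t. \<Sum>e\<in>exp_box {1..d} tau. \<Sum>m<e j.
      (c e * xd ^ e d) * (\<Prod>k\<in>?K. s k ^ se e m k) * (\<Prod>k\<in>?K. t k ^ te e m k))"
    unfolding dixon_quot_def sum_distrib_right sum_distrib_left dixon_quot_term_eq[OF assms]
    by (simp add: se_def te_def mult.assoc)
  have "se e m \<in> exp_box ?K (quot_s_deg tau j)" "te e m \<in> exp_box ?K (quot_t_deg tau j)"
    if "e \<in> exp_box {1..d} tau" "m < e j" for e m
  proof -
    have "e k \<le> tau k" if "k \<in> {1..d}" for k
      using \<open>e \<in> exp_box {1..d} tau\<close> that by (auto simp: exp_box_def)
    moreover have "m \<le> tau j - 1" "e j - Suc m \<le> tau j - 1"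
      using calculation[of j] \<open>m < e j\<close> assms by auto
    ultimately show "se e m \<in> exp_box ?K (quot_s_deg tau j)" "te e m \<in> exp_box ?K (quot_t_deg tau j)"
      using \<open>m < e j\<close> assms by (auto simp: exp_box_def se_def te_def quot_s_deg_def quot_t_deg_def)
  qed
  then show ?thesis
    unfolding eq by (auto intro!: is_bipoly_sum is_bipoly_monomial)
qed

lemma Suc_mult_minus_1: "Suc a * x - 1 = a * x + (x - (1::nat))"
  by (cases x) auto

lemma sum_quot_s_deg:
  "k \<in> {1..m} \<Longrightarrow> (\<Sum>l\<in>{1..m}. quot_s_deg tau l k) = k * tau k - 1"
proof (induction m)
  case (Suc m)
  show ?case
  proof (cases "k = Suc m")
    case True
    then have "(\<Sum>l\<in>{1..m}. quot_s_deg tau l k) = (\<Sum>l\<in>{1..m}. tau k)"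
      by (intro sum.cong) (auto simp: quot_s_deg_def)
    then show ?thesis
      using True Suc_mult_minus_1[of m "tau k"] by (simp add: quot_s_deg_def)
  qed (use Suc in \<open>simp add: quot_s_deg_def\<close>)
qed simp

lemma sum_quot_t_deg:
  "k \<in> {1..m} \<Longrightarrow> (\<Sum>l\<in>{1..m}. quot_t_deg tau l k) = (Suc m - k) * tau k - 1"
proof (induction m)
  case (Suc m)
  show ?case
  proof (cases "k = Suc m")
    case True
    then have "(\<Sum>l\<in>{1..m}. quot_t_deg tau l k) = 0"
      by (intro sum.neutral) (auto simp: quot_t_deg_def)
    then show ?thesis using True by (simp add: quot_t_deg_def)
  qed (use Suc in \<open>simp add: quot_t_deg_def Suc_diff_le Suc_mult_minus_1\<close>)
qed simp

section \<open>Existence of the Dixon coefficients\<close>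

definition dixon_fwd_quot :: "nat \<Rightarrow> (nat \<Rightarrow> nat) \<Rightarrow> (nat \<Rightarrow> (nat \<Rightarrow> nat) \<Rightarrow> complex) \<Rightarrow> complex
    \<Rightarrow> (nat \<Rightarrow> complex) \<Rightarrow> (nat \<Rightarrow> complex) \<Rightarrow> complex" where
  "dixon_fwd_quot d tau C xd s t = leibniz_det {1..d} (\<lambda>i l.
     if l < d then dixon_quot d tau (C i) xd l s t else poly_eval {1..d} tau (C i) (dixon_arg d l s t xd))"

definition dixon_bwd_quot :: "nat \<Rightarrow> (nat \<Rightarrow> nat) \<Rightarrow> (nat \<Rightarrow> (nat \<Rightarrow> nat) \<Rightarrow> complex) \<Rightarrow> complex
    \<Rightarrow> (nat \<Rightarrow> complex) \<Rightarrow> (nat \<Rightarrow> complex) \<Rightarrow> complex" where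
  "dixon_bwd_quot d tau C xd s t = leibniz_det {1..d} (\<lambda>i l.
     if 1 < l then - dixon_quot d tau (C i) xd (l - 1) s t else poly_eval {1..d} tau (C i) (dixon_arg d l s t xd))"

lemma dixon_det_eq_fwd_quot:
  assumes "1 \<le> d"
  shows "dixon_det d tau C xd s t = (\<Prod>k\<in>{1..d-1}. s k - t k) * dixon_fwd_quot d tau C xd s t"
proof -
  let ?E = "\<lambda>i l. poly_eval {1..d} tau (C i) (dixon_arg d l s t xd)"
  have "dixon_det d tau C xd s t
      = leibniz_det {1..d} (\<lambda>i l. if l \<le> d - 1 then ?E i l - ?E i (Suc l) else ?E i l)"
    unfolding dixon_det_def using assms by (intro leibniz_det_forward_diffs[symmetric]) auto
  also have "\<dots> = (\<Prod>l\<in>{1..d}. if l < d then s l - t l else 1) * dixon_fwd_quot d tau C xd s t"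
    unfolding dixon_fwd_quot_def using poly_eval_dixon_arg_diff by (intro leibniz_det_scale_cols) auto
  also have "(\<Prod>l\<in>{1..d}. if l < d then s l - t l else 1) = (\<Prod>k\<in>{1..d-1}. s k - t k)"
  proof -
    have top: "{1..d} = insert d {1..d-1}"
      using assms by auto
    show ?thesis
      unfolding top by (subst prod.insert) (auto intro!: prod.cong)
  qed
  finally show ?thesis .
qed

lemma dixon_det_eq_bwd_quot:
  assumes "1 \<le> d"
  shows "dixon_det d tau C xd s t = (\<Prod>k\<in>{1..d-1}. s k - t k) * dixon_bwd_quot d tau C xd s t"
proof -
  let ?E = "\<lambda>i l. poly_eval {1..d} tau (C i) (dixon_arg d l s t xd)"
  have "dixon_det d tau C xd s t
      = leibniz_det {1..d} (\<lambda>i l. if d - (d - 1) < l then ?E i l - ?E i (l - 1) else ?E i l)"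
    unfolding dixon_det_def using assms by (intro leibniz_det_backward_diffs[symmetric]) auto
  also have "\<dots> = (\<Prod>l\<in>{1..d}. if 1 < l then s (l - 1) - t (l - 1) else 1) * dixon_bwd_quot d tau C xd s t"
    unfolding dixon_bwd_quot_def
  proof (intro leibniz_det_scale_cols)
    fix i l assume "l \<in> {1..d}"
    then show "(if d - (d - 1) < l then ?E i l - ?E i (l - 1) else ?E i l)
        = (if 1 < l then s (l - 1) - t (l - 1) else 1) *
          (if 1 < l then - dixon_quot d tau (C i) xd (l - 1) s t else ?E i l)"
      using assms poly_eval_dixon_arg_diff[of "l - 1" d tau "C i" s t xd]
      by (cases "1 < l") (auto simp: algebra_simps)
  qed simp
  also have "(\<Prod>l\<in>{1..d}. if 1 < l then s (l - 1) - t (l - 1) else 1) = (\<Prod>k\<in>{1..d-1}. s k - t k)"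
  proof -
    have bot: "{1..d} = insert 1 (Suc ` {1..d-1})"
      using assms by (auto simp: image_iff intro: exI[of _ "x - 1" for x])
    show ?thesis
      unfolding bot by (subst prod.insert) (auto simp: prod.reindex simp del: image_Suc_atLeastAtMost)
  qed
  finally show ?thesis .
qed

lemma is_bipoly_dixon_fwd_quot:
  assumes "1 \<le> d"
  shows "is_bipoly {1..d-1} (\<lambda>k. k * tau k - 1) (\<lambda>k. (d - k) * tau k - 1 + tau k) (dixon_fwd_quot d tau C xd)"
proof -
  let ?K = "{1..d-1}"
  let ?Bs = "\<lambda>l. if l < d then quot_s_deg tau l else (\<lambda>k. if d \<le> k then tau k else 0)"
  let ?Bt = "\<lambda>l. if l < d then quot_t_deg tau l else (\<lambda>k. if k < d then tau k else 0)"
  have top: "{1..d} = insert d ?K" using assms by auto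
  have deg: "is_bipoly ?K (\<lambda>k. \<Sum>l\<in>{1..d}. ?Bs l k) (\<lambda>k. \<Sum>l\<in>{1..d}. ?Bt l k) (dixon_fwd_quot d tau C xd)"
    unfolding dixon_fwd_quot_def
  proof (intro is_bipoly_leibniz_det)
    fix i l assume "l \<in> {1..d}"
    then show "is_bipoly ?K (?Bs l) (?Bt l) (\<lambda>s t. if l < d then dixon_quot d tau (C i) xd l s t
        else poly_eval {1..d} tau (C i) (dixon_arg d l s t xd))"
      using is_bipoly_dixon_quot[of l d tau "C i" xd] is_bipoly_poly_eval_dixon_arg[of d d tau "C i" xd]
      by (cases "l < d") auto
  qed auto
  have sum_Bs: "(\<Sum>l\<in>{1..d}. ?Bs l k) = (\<Sum>l\<in>?K. quot_s_deg tau l k)" if "k \<in> ?K" for k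
    using that unfolding top by (subst sum.insert) (auto intro!: sum.cong)
  have sum_Bt: "(\<Sum>l\<in>{1..d}. ?Bt l k) = (\<Sum>l\<in>?K. quot_t_deg tau l k) + tau k" if "k \<in> ?K" for k
    using that unfolding top by (subst sum.insert) (auto intro!: sum.cong)
  have closed: "(\<Sum>l\<in>?K. quot_s_deg tau l k) = k * tau k - 1"
      "(\<Sum>l\<in>?K. quot_t_deg tau l k) = (d - k) * tau k - 1" if "k \<in> ?K" for k
    using sum_quot_s_deg[OF that] sum_quot_t_deg[OF that] assms by simp_all
  show ?thesis
    by (rule is_bipoly_mono[OF _ deg]) (simp_all only: sum_Bs sum_Bt closed finite_atLeastAtMost order_refl)
qed

lemma is_bipoly_dixon_bwd_quot:
  assumes "1 \<le> d"
  shows "is_bipoly {1..d-1} (\<lambda>k. k * tau k - 1 + tau k) (\<lambda>k. (d - k) * tau k - 1) (dixon_bwd_quot d tau C xd)"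
proof -
  let ?K = "{1..d-1}"
  let ?Bs = "\<lambda>l. if 1 < l then quot_s_deg tau (l - 1) else (\<lambda>k. if 1 \<le> k then tau k else 0)"
  let ?Bt = "\<lambda>l. if 1 < l then quot_t_deg tau (l - 1) else (\<lambda>k. if k < 1 then tau k else 0)"
  have bot: "{1..d} = insert 1 (Suc ` ?K)"
    using assms by (auto simp: image_iff intro: exI[of _ "x - 1" for x])
  have deg: "is_bipoly ?K (\<lambda>k. \<Sum>l\<in>{1..d}. ?Bs l k) (\<lambda>k. \<Sum>l\<in>{1..d}. ?Bt l k) (dixon_bwd_quot d tau C xd)"
    unfolding dixon_bwd_quot_def
  proof (intro is_bipoly_leibniz_det)
    fix i l assume "l \<in> {1..d}"
    then show "is_bipoly ?K (?Bs l) (?Bt l) (\<lambda>s t. if 1 < l then - dixon_quot d tau (C i) xd (l - 1) s t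
        else poly_eval {1..d} tau (C i) (dixon_arg d l s t xd))"
      using is_bipoly_cmult[OF is_bipoly_dixon_quot[of "l - 1" d tau "C i" xd], of "-1"]
        is_bipoly_poly_eval_dixon_arg[of 1 d tau "C i" xd]
      by (cases "1 < l") auto
  qed auto
  have sum_Bs: "(\<Sum>l\<in>{1..d}. ?Bs l k) = (\<Sum>l\<in>?K. quot_s_deg tau l k) + tau k" if "k \<in> ?K" for k
    using that unfolding bot by (subst sum.insert) (auto simp: sum.reindex simp del: image_Suc_atLeastAtMost)
  have sum_Bt: "(\<Sum>l\<in>{1..d}. ?Bt l k) = (\<Sum>l\<in>?K. quot_t_deg tau l k)" if "k \<in> ?K" for k
    using that unfolding bot by (subst sum.insert) (auto simp: sum.reindex simp del: image_Suc_atLeastAtMost)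
  have closed: "(\<Sum>l\<in>?K. quot_s_deg tau l k) = k * tau k - 1"
      "(\<Sum>l\<in>?K. quot_t_deg tau l k) = (d - k) * tau k - 1" if "k \<in> ?K" for k
    using sum_quot_s_deg[OF that] sum_quot_t_deg[OF that] assms by simp_all
  show ?thesis
    by (rule is_bipoly_mono[OF _ deg]) (simp_all only: sum_Bs sum_Bt closed finite_atLeastAtMost order_refl)
qed

lemma is_bipoly_dixon_fwd_quot_sharp:
  assumes "1 \<le> d"
  shows "is_bipoly {1..d-1} (\<lambda>k. k * tau k - 1) (\<lambda>k. (d - k) * tau k - 1) (dixon_fwd_quot d tau C xd)"
proof -
  let ?K = "{1..d-1}"
  let ?q = "dixon_fwd_quot d tau C xd"
  let ?q' = "dixon_bwd_quot d tau C xd"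
  let ?As = "\<lambda>k. range (of_nat :: nat \<Rightarrow> complex)"
  let ?At = "\<lambda>k. range (\<lambda>m. - of_nat (Suc m) :: complex)"
  have eq: "?q s t = ?q' s t" if "s \<in> Pi ?K ?As" "t \<in> Pi ?K ?At" for s t
  proof -
    have "s k - t k \<noteq> 0" if "k \<in> ?K" for k
    proof -
      obtain a b where "s k = of_nat a" "t k = - of_nat (Suc b)"
        using \<open>s \<in> Pi ?K ?As\<close> \<open>t \<in> Pi ?K ?At\<close> \<open>k \<in> ?K\<close> by blast
      then have "s k - t k = of_nat (a + Suc b)" by simp
      then show ?thesis by (simp only: of_nat_eq_0_iff)
    qed
    then have "(\<Prod>k\<in>?K. s k - t k) \<noteq> 0" by simp
    moreover have "(\<Prod>k\<in>?K. s k - t k) * ?q s t = (\<Prod>k\<in>?K. s k - t k) * ?q' s t"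
      by (simp only: dixon_det_eq_fwd_quot[OF assms, symmetric] dixon_det_eq_bwd_quot[OF assms, symmetric])
    ultimately show ?thesis by simp
  qed
  have inf: "infinite (?As k)" "infinite (?At k)" for k
    by (intro range_inj_infinite; simp add: inj_on_def)+
  show ?thesis
    by (rule is_bipoly_min_degrees[OF finite_atLeastAtMost is_bipoly_dixon_fwd_quot[OF assms]
          is_bipoly_dixon_bwd_quot[OF assms] _ _ inf eq]) simp_all
qed

lemma s_exps_eq_exp_box: "s_exps d tau = exp_box {1..d-1} (\<lambda>k. k * tau k - 1)"
  unfolding s_exps_def exp_box_def ..

lemma t_exps_eq_exp_box: "t_exps d tau = exp_box {1..d-1} (\<lambda>k. (d - k) * tau k - 1)"
  unfolding t_exps_def exp_box_def ..

lemma dixon_coeffs_spec: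
  assumes "1 \<le> d" "r \<in> kidx d n" "c \<in> kidx d n"
  shows "(\<Prod>k\<in>{1..d-1}. s k - t k) * bipoly_eval {1..d-1} (\<lambda>k. k * tau k - 1) (\<lambda>k. (d - k) * tau k - 1)
      (\<lambda>i j. dixon_coeffs d tau n Pc xd i j r c) s t = tensor_det d tau Pc s t xd r c"
proof -
  let ?K = "{1..d-1}"
  let ?Bs = "\<lambda>k. k * tau k - 1"
  let ?Bt = "\<lambda>k. (d - k) * tau k - 1"
  let ?P = "\<lambda>A. \<forall>s t. \<forall>r\<in>kidx d n. \<forall>c\<in>kidx d n. (\<Prod>k\<in>?K. s k - t k) *
      (\<Sum>i\<in>s_exps d tau. \<Sum>j\<in>t_exps d tau.
          A i j r c * (\<Prod>k\<in>?K. s k ^ i k) * (\<Prod>k\<in>?K. t k ^ j k))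
      = tensor_det d tau Pc s t xd r c"
  define a where "a r c = (SOME a. \<forall>s t. tensor_det d tau Pc s t xd r c =
      (\<Prod>k\<in>?K. s k - t k) * bipoly_eval ?K ?Bs ?Bt a s t)" for r c
  have "\<forall>s t. tensor_det d tau Pc s t xd r c = (\<Prod>k\<in>?K. s k - t k) * bipoly_eval ?K ?Bs ?Bt (a r c) s t"
    for r c
  proof -
    have "\<exists>a. \<forall>s t. tensor_det d tau Pc s t xd r c = (\<Prod>k\<in>?K. s k - t k) * bipoly_eval ?K ?Bs ?Bt a s t"
      using is_bipoly_dixon_fwd_quot_sharp[OF assms(1), where tau = tau and C = "\<lambda>i e. Pc i e (r i) (c i)"
          and xd = xd]
      unfolding is_bipoly_def tensor_det_eq_dixon_det dixon_det_eq_fwd_quot[OF assms(1)] by auto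
    then show ?thesis
      unfolding a_def by (rule someI_ex)
  qed
  then have "?P (\<lambda>i j r c. a r c i j)"
    by (simp add: bipoly_eval_def s_exps_eq_exp_box t_exps_eq_exp_box)
  then have "?P (dixon_coeffs d tau n Pc xd)"
    unfolding dixon_coeffs_def by (rule someI[where P = ?P])
  then show ?thesis
    using assms(2,3) by (simp add: bipoly_eval_def s_exps_eq_exp_box t_exps_eq_exp_box)
qed

section \<open>The eigenvector\<close>

lemma tensor_det_mult_ktensor_vec_eq_0:
  assumes "1 \<le> d" "r \<in> kidx d n"
    and "\<forall>i\<in>{1..d}. \<forall>a<n i. (\<Sum>b<n i. mpoly_eval d tau (Pc i) xs a b * vs i b) = 0"
  shows "(\<Sum>c\<in>kidx d n. tensor_det d tau Pc xs t (xs d) r c * ktensor_vec d vs c) = 0"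
proof -
  let ?S = "{1..d}"
  define M where "M i l = mpoly_eval d tau (Pc i) (dixon_arg d l xs t (xs d))" for i l
  have "(\<Sum>c\<in>kidx d n. tensor_det d tau Pc xs t (xs d) r c * ktensor_vec d vs c)
      = (\<Sum>c\<in>kidx d n. \<Sum>\<sigma>\<in>{\<sigma>. \<sigma> permutes ?S}. of_int (sign \<sigma>) *
          (\<Prod>i\<in>?S. M i (\<sigma> i) (r i) (c i) * vs i (c i)))"
    unfolding tensor_det_def ktensor_vec_def M_def
    by (simp add: sum_distrib_right prod.distrib mult.assoc)
  also have "\<dots> = (\<Sum>\<sigma>\<in>{\<sigma>. \<sigma> permutes ?S}. of_int (sign \<sigma>) *
          (\<Sum>c\<in>kidx d n. \<Prod>i\<in>?S. M i (\<sigma> i) (r i) (c i) * vs i (c i)))"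
    by (subst sum.swap) (simp add: sum_distrib_left)
  also have "\<dots> = (\<Sum>\<sigma>\<in>{\<sigma>. \<sigma> permutes ?S}. of_int (sign \<sigma>) *
          (\<Prod>i\<in>?S. \<Sum>b<n i. M i (\<sigma> i) (r i) b * vs i b))"
    unfolding kidx_def by (subst prod_sum_PiE) auto
  also have "\<dots> = 0"
  proof (intro sum.neutral ballI)
    fix \<sigma> assume "\<sigma> \<in> {\<sigma>. \<sigma> permutes ?S}"
    then have \<sigma>: "\<sigma> permutes ?S" by simp
    define i0 where "i0 = inv \<sigma> 1"
    have i0: "i0 \<in> ?S" "\<sigma> i0 = 1"
      unfolding i0_def using assms(1) permutes_inverses(1)[OF \<sigma>] permutes_in_image[OF permutes_inv[OF \<sigma>]]
      by auto
    have "M i0 1 = mpoly_eval d tau (Pc i0) xs"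
      unfolding M_def mpoly_eval_def by (intro ext sum.cong refl arg_cong2[where f = "(*)"] prod.cong)
        (auto simp: dixon_arg_def)
    moreover have "r i0 < n i0" using assms(2) i0(1) by (auto simp: kidx_def)
    ultimately have "(\<Sum>b<n i0. M i0 (\<sigma> i0) (r i0) b * vs i0 b) = 0"
      using assms(3) i0 by simp
    then have "(\<Prod>i\<in>?S. \<Sum>b<n i. M i (\<sigma> i) (r i) b * vs i b) = 0"
      using i0(1) by (intro prod_zero) auto
    then show "of_int (sign \<sigma>) * (\<Prod>i\<in>?S. \<Sum>b<n i. M i (\<sigma> i) (r i) b * vs i b) = 0"
      by simp
  qed
  finally show ?thesis .
qed

lemma ktensor_vec_nonzero:
  assumes "\<forall>i\<in>{1..d}. \<exists>b<n i. vs i b \<noteq> 0"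
  obtains c where "c \<in> kidx d n" "ktensor_vec d vs c \<noteq> 0"
proof -
  obtain b where b: "\<forall>i\<in>{1..d}. b i < n i \<and> vs i (b i) \<noteq> 0"
    using bchoice[OF assms] by blast
  then have "restrict b {1..d} \<in> kidx d n" "ktensor_vec d vs (restrict b {1..d}) \<noteq> 0"
    by (auto simp: kidx_def ktensor_vec_def)
  then show ?thesis using that by blast
qed

lemma dixon_resultant_mult_eigvec_eq_0:
  assumes "1 \<le> d" "j \<in> t_exps d tau" "r \<in> kidx d n"
    and "\<forall>i\<in>{1..d}. \<forall>a<n i. (\<Sum>b<n i. mpoly_eval d tau (Pc i) xs a b * vs i b) = 0"
  shows "dixon_mult_vec d tau n (dixon_resultant d tau n Pc (xs d))
      (\<lambda>(i, c). (\<Prod>k\<in>{1..d-1}. xs k ^ i k) * ktensor_vec d vs c) (j, r) = 0"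
proof -
  let ?K = "{1..d-1}"
  let ?Bs = "\<lambda>k. k * tau k - 1"
  let ?Bt = "\<lambda>k. (d - k) * tau k - 1"
  let ?A = "dixon_coeffs d tau n Pc (xs d)"
  let ?v = "ktensor_vec d vs"
  let ?X = "\<lambda>i. \<Prod>k\<in>?K. xs k ^ i k"
  define g where "g j = (\<Sum>i\<in>s_exps d tau. \<Sum>c\<in>kidx d n. ?A i j r c * (?X i * ?v c))" for j
  have "poly_eval ?K ?Bt g t = 0" if t: "t \<in> Pi ?K (\<lambda>k. - {xs k})" for t
  proof -
    let ?T = "\<lambda>j. \<Prod>k\<in>?K. t k ^ j k"
    have "poly_eval ?K ?Bt g t
        = (\<Sum>j\<in>t_exps d tau. \<Sum>i\<in>s_exps d tau. \<Sum>c\<in>kidx d n. ?A i j r c * ?X i * ?T j * ?v c)"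
      unfolding poly_eval_def g_def t_exps_eq_exp_box sum_distrib_right by (simp add: mult_ac)
    also have "\<dots> = (\<Sum>c\<in>kidx d n. \<Sum>i\<in>s_exps d tau. \<Sum>j\<in>t_exps d tau. ?A i j r c * ?X i * ?T j * ?v c)"
      by (subst sum.swap, subst sum.swap) (auto intro!: sum.cong sum.swap)
    also have "\<dots> = (\<Sum>c\<in>kidx d n. bipoly_eval ?K ?Bs ?Bt (\<lambda>i j. ?A i j r c) xs t * ?v c)"
      unfolding bipoly_eval_def s_exps_eq_exp_box t_exps_eq_exp_box sum_distrib_right ..
    finally have "(\<Prod>k\<in>?K. xs k - t k) * poly_eval ?K ?Bt g t
        = (\<Sum>c\<in>kidx d n. ((\<Prod>k\<in>?K. xs k - t k) * bipoly_eval ?K ?Bs ?Bt (\<lambda>i j. ?A i j r c) xs t) * ?v c)"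
      by (simp add: sum_distrib_left mult.assoc)
    also have "\<dots> = (\<Sum>c\<in>kidx d n. tensor_det d tau Pc xs t (xs d) r c * ?v c)"
      using assms(1,3) by (intro sum.cong refl arg_cong2[where f = "(*)"] dixon_coeffs_spec)
    also have "\<dots> = 0"
      using assms(1,3,4) by (rule tensor_det_mult_ktensor_vec_eq_0)
    finally have "(\<Prod>k\<in>?K. xs k - t k) * poly_eval ?K ?Bt g t = 0" .
    moreover have "(\<Prod>k\<in>?K. xs k - t k) \<noteq> 0"
      using t by (auto simp: Pi_iff)
    ultimately show ?thesis by simp
  qed
  then have "\<forall>j\<in>exp_box ?K ?Bt. g j = 0"
    by (intro poly_eval_eq_0_imp_coeffs_eq_0) (auto simp: infinite_UNIV_char_0)
  then show ?thesis
    using assms(2) unfolding dixon_mult_vec_def dixon_resultant_def g_def t_exps_eq_exp_box by simp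
qed

theorem proposition4p2:
  fixes d :: nat and tau :: "nat \<Rightarrow> nat" and n :: "nat \<Rightarrow> nat"
    and Pc :: "nat \<Rightarrow> (nat \<Rightarrow> nat) \<Rightarrow> nat \<Rightarrow> nat \<Rightarrow> complex"
    and xs :: "nat \<Rightarrow> complex" and vs :: "nat \<Rightarrow> nat \<Rightarrow> complex"
  assumes "d \<ge> 2"
    and "\<forall>k\<in>{1..d-1}. tau k \<ge> 1"
    and "\<forall>i\<in>{1..d}. \<exists>b<n i. vs i b \<noteq> 0"
    and "\<forall>i\<in>{1..d}. \<forall>a<n i. (\<Sum>b<n i. mpoly_eval d tau (Pc i) xs a b * vs i b) = 0"
  defines "V \<equiv> (\<lambda>(i, c). (\<Prod>k\<in>{1..d-1}. xs k ^ i k) * ktensor_vec d vs c)"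
  shows "(\<exists>i\<in>s_exps d tau. \<exists>c\<in>kidx d n. V (i, c) \<noteq> 0)
    \<and> (\<forall>j\<in>t_exps d tau. \<forall>r\<in>kidx d n.
         dixon_mult_vec d tau n (dixon_resultant d tau n Pc (xs d)) V (j, r) = 0)"
proof
  obtain c where c: "c \<in> kidx d n" "ktensor_vec d vs c \<noteq> 0"
    using ktensor_vec_nonzero[OF assms(3)] by blast
  have "restrict (\<lambda>k. 0) {1..d-1} \<in> s_exps d tau"
    unfolding s_exps_def by auto
  moreover have "V (restrict (\<lambda>k. 0) {1..d-1}, c) \<noteq> 0"
    using c(2) unfolding V_def by simp
  ultimately show "\<exists>i\<in>s_exps d tau. \<exists>c\<in>kidx d n. V (i, c) \<noteq> 0"
    using c(1) by blast
  show "\<forall>j\<in>t_exps d tau. \<forall>r\<in>kidx d n.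
      dixon_mult_vec d tau n (dixon_resultant d tau n Pc (xs d)) V (j, r) = 0"
    unfolding V_def using assms(1) by (intro ballI dixon_resultant_mult_eigvec_eq_0 assms(4)) auto
qed

end
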